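(* Let $p$ be an odd prime, let $M,S$ be integers with $0\leq S<M$, and let $\zeta$ be a primitive $p^M$-th root of unity. Then for every integer $k$ with $(k,p)=1$ and $0\leq k<p^S$, $$\sum_{i=0}^{p^S-1}\zeta^{(1+kp^{M-S})^i}=0.$$ *)

theory Defs
  imports Complex_Main "HOL-Computational_Algebra.Primes"
begin

definition primitive_root_of_unity :: "nat \<Rightarrow> complex \<Rightarrow> bool" where
  "primitive_root_of_unity n z \<longleftrightarrow> 0 < n \<and> z ^ n = 1 \<and> (\<forall>j. 0 < j \<and> j < n \<longrightarrow> z ^ j \<noteq> 1)"

end

theory Submission
  imports Defs "HOL-Number_Theory.Number_Theory"
begin

(* Put a = 1 + k p^(M-S). Raising 1 + c p^m (m \<ge> 1) to the p-th power gives 1 + c' p^(m+1)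
   with c' \<equiv> c (mod p), because p is odd; iterating, a has multiplicative order exactly p^S
   modulo p^M. So the p^S powers of a are pairwise incongruent modulo p^M, and since they are all
   \<equiv> 1 (mod p^(M-S)) they run once through the residues 1 + j p^(M-S), j < p^S. The sum is thus
   \<zeta> times a full geometric sum of the nontrivial p^S-th root of unity \<zeta>^(p^(M-S)), which is 0. *)

lemma prime_power_dvd_binomial_summand:
  fixes p m c i :: nat
  assumes "odd p" "1 \<le> m" "2 \<le> i"
  shows "p ^ (m + 2) dvd (p choose i) * (c * p ^ m) ^ i"
proof (cases "i = 2")
  case True
  \<comment> \<open>the only place where oddness is needed: p divides p choose 2 = p (p - 1) / 2\<close>
  obtain h where h: "p = 2 * h + 1" using \<open>odd p\<close> oddE by blast
  have "(p choose i) * (c * p ^ m) ^ i = h * c\<^sup>2 * p ^ (2 * m + 1)"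
    using True choose_two[of p] by (simp add: h power_mult[symmetric] algebra_simps)
  moreover have "p ^ (m + 2) dvd p ^ (2 * m + 1)"
    using \<open>1 \<le> m\<close> by (intro le_imp_power_dvd) simp
  ultimately show ?thesis by simp
next
  case False
  have "m + 2 \<le> 3 * m" using \<open>1 \<le> m\<close> by simp
  also have "\<dots> \<le> m * i" using False \<open>2 \<le> i\<close> by simp
  finally have "p ^ (m + 2) dvd p ^ (m * i)" by (rule le_imp_power_dvd)
  then show ?thesis by (simp add: power_mult_distrib power_mult)
qed

lemma one_plus_prime_power_pow_prime:
  fixes p m c :: nat
  assumes "odd p" "1 \<le> m"
  shows "\<exists>c'. (1 + c * p ^ m) ^ p = 1 + c' * p ^ (m + 1) \<and> [c' = c] (mod p)"
proof -
  define summand where "summand i = (p choose i) * (c * p ^ m) ^ i" for i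
  have "p ^ (m + 2) dvd (\<Sum>i\<in>{2..p}. summand i)"
    unfolding summand_def using assms by (intro dvd_sum prime_power_dvd_binomial_summand) auto
  then obtain d where d: "(\<Sum>i\<in>{2..p}. summand i) = p ^ (m + 2) * d" by blast
  have "(1 + c * p ^ m) ^ p = (\<Sum>i\<le>p. summand i)"
    using binomial_ring[of "c * p ^ m" 1 p] by (simp add: summand_def add.commute)
  also have "{..p} = {..<2} \<union> {2..p}" using odd_pos[OF \<open>odd p\<close>] by auto
  also have "(\<Sum>i\<in>{..<2} \<union> {2..p}. summand i) = (\<Sum>i<2. summand i) + (\<Sum>i\<in>{2..p}. summand i)"
    by (rule sum.union_disjoint) auto
  also have "(\<Sum>i<2. summand i) = 1 + c * p ^ (m + 1)"
    by (simp add: summand_def numeral_2_eq_2)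
  also have "1 + c * p ^ (m + 1) + (\<Sum>i\<in>{2..p}. summand i) = 1 + (c + p * d) * p ^ (m + 1)"
    by (simp add: d algebra_simps)
  finally show ?thesis by (intro exI[of _ "c + p * d"]) (simp add: cong_def)
qed

lemma one_plus_prime_power_pow_prime_power:
  fixes p m c t :: nat
  assumes "odd p" "1 \<le> m"
  shows "\<exists>c'. (1 + c * p ^ m) ^ (p ^ t) = 1 + c' * p ^ (m + t) \<and> [c' = c] (mod p)"
proof (induction t)
  case 0
  show ?case by (intro exI[of _ c]) simp
next
  case (Suc t)
  then obtain c' where c': "(1 + c * p ^ m) ^ (p ^ t) = 1 + c' * p ^ (m + t)" "[c' = c] (mod p)"
    by blast
  obtain c'' where c'': "(1 + c' * p ^ (m + t)) ^ p = 1 + c'' * p ^ (m + t + 1)" "[c'' = c'] (mod p)"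
    using one_plus_prime_power_pow_prime[of p "m + t" c'] assms by auto
  have "(1 + c * p ^ m) ^ (p ^ Suc t) = ((1 + c * p ^ m) ^ (p ^ t)) ^ p"
    by (simp add: power_mult[symmetric] mult.commute)
  also have "\<dots> = 1 + c'' * p ^ (m + Suc t)"
    using c'(1) c''(1) by simp
  finally show ?case
    using cong_trans[OF c''(2) c'(2)] by blast
qed

lemma ord_one_plus_prime_power:
  fixes p m c t :: nat
  assumes "prime p" "odd p" "1 \<le> m" "coprime c p"
  shows "ord (p ^ (m + t)) (1 + c * p ^ m) = p ^ t"
proof -
  let ?a = "1 + c * p ^ m"
  obtain c' where "?a ^ (p ^ t) = 1 + c' * p ^ (m + t)"
    using one_plus_prime_power_pow_prime_power[OF assms(2,3), of c t] by blast
  then have "[?a ^ (p ^ t) = 1] (mod p ^ (m + t))"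
    unfolding cong_def by (simp only: mod_mult_self1)
  then obtain s where s: "s \<le> t" "ord (p ^ (m + t)) ?a = p ^ s"
    using ord_divides divides_primepow_nat[OF \<open>prime p\<close>] by metis
  have "s = t"
  proof (rule ccontr)
    assume "s \<noteq> t"
    with s have "0 < t" "ord (p ^ (m + t)) ?a dvd p ^ (t - 1)"
      by (auto intro: le_imp_power_dvd)
    then have "[?a ^ (p ^ (t - 1)) = 1] (mod p ^ (m + t))"
      by (simp add: ord_divides')
    also have "p ^ (m + t) = p ^ (m + t - 1) * p"
      using \<open>0 < t\<close> by (cases t) simp_all
    finally have one: "[?a ^ (p ^ (t - 1)) = 1] (mod p ^ (m + t - 1) * p)" .
    obtain c' where c': "?a ^ (p ^ (t - 1)) = 1 + c' * p ^ (m + t - 1)" "[c' = c] (mod p)"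
      using one_plus_prime_power_pow_prime_power[OF assms(2,3), of c "t - 1"] \<open>0 < t\<close> by auto
    have "p ^ (m + t - 1) * p dvd c' * p ^ (m + t - 1)"
      using one unfolding c'(1) cong_add_lcancel_0_nat cong_0_iff .
    then have "p dvd c'"
      using prime_gt_0_nat[OF \<open>prime p\<close>] by (simp add: mult.commute)
    moreover have "coprime c' p"
      using c'(2) \<open>coprime c p\<close> cong_imp_coprime cong_sym by blast
    ultimately show False
      using \<open>prime p\<close> coprime_absorb_left[of p c'] by (simp add: coprime_commute)
  qed
  with s show ?thesis by simp
qed

lemma sum_power_mod_eq_sum_residue_class:
  fixes a q n :: nat and g :: "nat \<Rightarrow> 'b :: comm_monoid_add"
  assumes "1 < q" "[a = 1] (mod q)" "ord (q * n) a = n"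
  shows "(\<Sum>i<n. g (a ^ i mod (q * n))) = (\<Sum>j<n. g (1 + j * q))"
proof -
  let ?pow = "\<lambda>i. a ^ i mod (q * n)" and ?res = "\<lambda>j. 1 + j * q"
  have inj_res: "inj_on ?res {..<n}"
    using \<open>1 < q\<close> by (auto simp: inj_on_def)
  have inj_pow: "inj_on ?pow {..<n}"
  proof (cases "n = 0")
    case False
    then have "coprime (q * n) a"
      using assms(3) ord_gt_0_iff[of "q * n" a] by simp
    then show ?thesis
      using inj_power_mod assms(3) by metis
  qed simp
  have "?pow ` {..<n} \<subseteq> ?res ` {..<n}"
  proof (rule image_subsetI)
    fix i assume "i \<in> {..<n}"
    define x where "x = a ^ i mod (q * n)"
    have "x mod q = a ^ i mod q"
      unfolding x_def by (simp add: mod_mod_cancel)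
    also have "\<dots> = 1"
      using cong_pow[OF assms(2), of i] \<open>1 < q\<close> by (simp add: cong_def)
    finally have "x = 1 + x div q * q"
      using div_mult_mod_eq[of x q] by simp
    moreover have "x div q < n"
      using \<open>i \<in> {..<n}\<close> \<open>1 < q\<close> unfolding x_def
      by (simp add: less_mult_imp_div_less mult.commute)
    ultimately show "x \<in> ?res ` {..<n}" by blast
  qed
  then have image: "?pow ` {..<n} = ?res ` {..<n}"
    using inj_pow inj_res by (intro card_subset_eq) (simp_all add: card_image)
  have "(\<Sum>i<n. g (?pow i)) = sum g (?pow ` {..<n})"
    using sum.reindex[OF inj_pow, of g] by simp
  also have "\<dots> = (\<Sum>j<n. g (?res j))"
    using sum.reindex[OF inj_res, of g] unfolding image by simp
  finally show ?thesis .
qed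

lemma power_exponent_mod:
  fixes z :: "'a :: monoid_mult"
  assumes "z ^ n = 1"
  shows "z ^ (k mod n) = z ^ k"
proof -
  have "z ^ k = z ^ (n * (k div n) + k mod n)"
    by simp
  also have "\<dots> = (z ^ n) ^ (k div n) * z ^ (k mod n)"
    by (simp only: power_add power_mult)
  finally show ?thesis
    using assms by simp
qed

lemma sum_primitive_root_of_unity_residue_class:
  assumes "primitive_root_of_unity (q * n) \<zeta>" "1 < n"
  shows "(\<Sum>j<n. \<zeta> ^ (r + j * q)) = 0"
proof -
  have "0 < q" "\<zeta> ^ (q * n) = 1" "\<And>j. 0 < j \<Longrightarrow> j < q * n \<Longrightarrow> \<zeta> ^ j \<noteq> 1"
    using assms(1) unfolding primitive_root_of_unity_def by auto
  then have "\<zeta> ^ q \<noteq> 1" "(\<zeta> ^ q) ^ n = 1"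
    using \<open>1 < n\<close> by (simp_all add: power_mult)
  then have "(\<Sum>j<n. (\<zeta> ^ q) ^ j) = 0"
    by (simp add: geometric_sum)
  moreover have "\<zeta> ^ (r + j * q) = \<zeta> ^ r * (\<zeta> ^ q) ^ j" for j
    by (simp add: power_add mult.commute flip: power_mult)
  ultimately show ?thesis
    by (simp add: sum_distrib_left[symmetric])
qed

theorem lemma5p1:
  fixes p M S k :: nat and \<zeta> :: complex
  assumes "prime p" and "odd p"
    and "S < M"
    and "primitive_root_of_unity (p ^ M) \<zeta>"
    and "coprime k p" and "k < p ^ S"
  shows "(\<Sum>i = 0..p ^ S - 1. \<zeta> ^ ((1 + k * p ^ (M - S)) ^ i)) = 0"
proof -
  define q n a where "q = p ^ (M - S)" and "n = p ^ S" and "a = 1 + k * q"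
  have "1 < p"
    using \<open>prime p\<close> prime_gt_1_nat by blast
  have "0 < S"
    using assms(1,5,6) by (cases S) auto
  have N: "p ^ M = q * n"
    unfolding q_def n_def using \<open>S < M\<close> by (simp flip: power_add)
  have "1 < q" "1 < n"
    unfolding q_def n_def using \<open>1 < p\<close> \<open>S < M\<close> \<open>0 < S\<close>
    by (intro one_less_power; simp)+
  have "ord (q * n) a = n"
    using ord_one_plus_prime_power[OF assms(1,2) _ assms(5), of "M - S" S] \<open>S < M\<close>
    unfolding a_def q_def n_def by (simp flip: power_add)
  have "[a = 1] (mod q)"
    unfolding a_def cong_def by (simp only: mod_mult_self1)
  have "\<zeta> ^ (q * n) = 1"
    using assms(4) unfolding N primitive_root_of_unity_def by simp
  moreover have "{0..p ^ S - 1} = {..<n}"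
    using \<open>1 < n\<close> unfolding n_def by auto
  ultimately have "(\<Sum>i = 0..p ^ S - 1. \<zeta> ^ (a ^ i)) = (\<Sum>i<n. \<zeta> ^ (a ^ i mod (q * n)))"
    by (simp add: power_exponent_mod)
  also have "\<dots> = (\<Sum>j<n. \<zeta> ^ (1 + j * q))"
    by (rule sum_power_mod_eq_sum_residue_class) fact+
  also have "\<dots> = 0"
    using sum_primitive_root_of_unity_residue_class assms(4) \<open>1 < n\<close> unfolding N by blast
  finally show ?thesis
    unfolding a_def q_def .
qed

end
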